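(* There is a sequence of positive numbers $(a_k)_{k\ge1}$ with $\sum_{k=1}^\infty a_k<\infty$ such that $\mathbb E(U_k)\le a_k$ for every $n\ge 2k$ and every $p\ge 2/5$, where $U_k$ is the number of proper star $k$-separations of $\Gamma\in G(n,p)$.
   Context: $G(n,p)$ is the Erdős–Rényi random graph on vertex set $V$, $|V|=n$, each edge independently present with probability $p$. For a graph $\Delta$ with vertex set $W$, a separation is $S\subset W$ with $S\ne\varnothing$, $S\ne W$ and no edges between $S$ and $W\setminus S$. $\mathrm{st}(a)$ is $a$ with its neighbours. A star separation of $\Gamma$ is a pair $(a,S)$ with $a\in V$, $S\subset V\setminus\mathrm{st}(a)$, such that $S$ is a separation of the full subgraph $\Gamma\setminus\mathrm{st}(a)$; it is a star $k$-separation if $|S|=k$, and proper if $S$ is not a separation of $\Gamma$. *)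

theory Defs
  imports Complex_Main
begin

text \<open>Graphs on the vertex set V = {0..<n}, given by their edge set: a set of
  2-element subsets of V.\<close>

definition all_edges :: "nat \<Rightarrow> nat set set" where
  "all_edges n = {e. \<exists>u v. u < n \<and> v < n \<and> u \<noteq> v \<and> e = {u, v}}"

definition st :: "nat set set \<Rightarrow> nat \<Rightarrow> nat set" where
  "st E a = insert a {v. {a, v} \<in> E}"

definition is_separation :: "nat set set \<Rightarrow> nat set \<Rightarrow> nat set \<Rightarrow> bool" where
  "is_separation E W S \<longleftrightarrow> S \<subseteq> W \<and> S \<noteq> {} \<and> S \<noteq> W \<and>
     (\<forall>u\<in>S. \<forall>v\<in>W - S. {u, v} \<notin> E)"

definition star_separation :: "nat \<Rightarrow> nat set set \<Rightarrow> nat \<Rightarrow> nat set \<Rightarrow> bool" where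
  "star_separation n E a S \<longleftrightarrow> a < n \<and> S \<subseteq> {..<n} - st E a \<and>
     is_separation E ({..<n} - st E a) S"

definition proper_star_k_separation :: "nat \<Rightarrow> nat set set \<Rightarrow> nat \<Rightarrow> nat \<Rightarrow> nat set \<Rightarrow> bool" where
  "proper_star_k_separation n E k a S \<longleftrightarrow> star_separation n E a S \<and> card S = k \<and>
     \<not> is_separation E {..<n} S"

definition U :: "nat \<Rightarrow> nat \<Rightarrow> nat set set \<Rightarrow> nat" where
  "U n k E = card {(a, S). proper_star_k_separation n E k a S}"

definition gnp_expectation :: "nat \<Rightarrow> real \<Rightarrow> (nat set set \<Rightarrow> real) \<Rightarrow> real" where
  "gnp_expectation n p X = (\<Sum>E\<in>Pow (all_edges n).
     p ^ card E * (1 - p) ^ (card (all_edges n) - card E) * X E)"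

end

theory Submission
  imports Defs
begin

text \<open>A star separation \<open>(a, S)\<close> comes with a vertex \<open>w\<close> of \<open>\<Gamma> \<setminus> st(a)\<close> outside \<open>S\<close>. Then the
  \<open>2k + 1\<close> edges from \<open>a\<close> to \<open>S\<close> and from \<open>w\<close> to \<open>S \<union> {a}\<close> are absent, and each of the
  remaining \<open>n - k - 2\<close> vertices is adjacent to \<open>a\<close> or has no edge to \<open>S \<union> {a}\<close>. These
  events involve disjoint sets of edges, so with \<open>q = 1 - p \<le> 3/5\<close> a first-moment count over
  the triples \<open>(a, S, w)\<close> gives
  \<open>E U_k \<le> n C(n-1,k) (n-1-k) q^(2k+1) (p + q^(k+1))^(n-k-2)\<close>.
  Comparing with a single term of the binomial expansion of
  \<open>1 = (q (1 - q^k) + p + q^(k+1))^(n+1)\<close> removes the dependence on \<open>n\<close> and leaves a bound of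
  order \<open>k^2 (3/5)^k\<close>, which is summable.\<close>

definition bernoulli_weight :: "real \<Rightarrow> 'a set \<Rightarrow> 'a set \<Rightarrow> real" where
  "bernoulli_weight p A E = p ^ card E * (1 - p) ^ card (A - E)"

lemma bernoulli_weight_Un:
  assumes "finite A" "finite B" "A \<inter> B = {}" "X \<subseteq> A" "Y \<subseteq> B"
  shows "bernoulli_weight p (A \<union> B) (X \<union> Y) = bernoulli_weight p A X * bernoulli_weight p B Y"
proof -
  have "card (X \<union> Y) = card X + card Y"
    using assms by (intro card_Un_disjoint) (auto intro: finite_subset)
  moreover have "card (A \<union> B - (X \<union> Y)) = card (A - X) + card (B - Y)"
  proof -
    have "A \<union> B - (X \<union> Y) = (A - X) \<union> (B - Y)" using assms by auto
    then show ?thesis using assms by (simp add: card_Un_disjoint disjoint_iff)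
  qed
  ultimately show ?thesis unfolding bernoulli_weight_def by (simp add: power_add algebra_simps)
qed

lemma sum_bernoulli_weight_Un:
  assumes "finite A" "finite B" "A \<inter> B = {}"
  shows "(\<Sum>E\<in>Pow (A \<union> B). bernoulli_weight p (A \<union> B) E * f (E \<inter> A) * g (E \<inter> B)) =
         (\<Sum>X\<in>Pow A. bernoulli_weight p A X * f X) * (\<Sum>Y\<in>Pow B. bernoulli_weight p B Y * g Y)"
proof -
  let ?union = "\<lambda>(X, Y). X \<union> Y"
  have inj: "inj_on ?union (Pow A \<times> Pow B)"
  proof (rule inj_onI, clarsimp)
    fix X Y X' Y' assume "X \<subseteq> A" "Y \<subseteq> B" "X' \<subseteq> A" "Y' \<subseteq> B" "X \<union> Y = X' \<union> Y'"
    then show "X = X' \<and> Y = Y'" using assms(3) by blast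
  qed
  have "Pow (A \<union> B) = ?union ` (Pow A \<times> Pow B)"
  proof
    show "Pow (A \<union> B) \<subseteq> ?union ` (Pow A \<times> Pow B)"
    proof
      fix E assume "E \<in> Pow (A \<union> B)"
      then have "E = ?union (E \<inter> A, E \<inter> B)" "(E \<inter> A, E \<inter> B) \<in> Pow A \<times> Pow B" by auto
      then show "E \<in> ?union ` (Pow A \<times> Pow B)" by blast
    qed
  qed auto
  then have "(\<Sum>E\<in>Pow (A \<union> B). bernoulli_weight p (A \<union> B) E * f (E \<inter> A) * g (E \<inter> B)) =
    (\<Sum>(X, Y)\<in>Pow A \<times> Pow B. bernoulli_weight p (A \<union> B) (X \<union> Y) * f ((X \<union> Y) \<inter> A) * g ((X \<union> Y) \<inter> B))"
    by (simp only: sum.reindex[OF inj]) (simp add: split_def)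
  also have "\<dots> = (\<Sum>(X, Y)\<in>Pow A \<times> Pow B. bernoulli_weight p A X * f X * (bernoulli_weight p B Y * g Y))"
  proof (rule sum.cong[OF refl], clarsimp)
    fix X Y assume XY: "X \<subseteq> A" "Y \<subseteq> B"
    then have "(X \<union> Y) \<inter> A = X" "(X \<union> Y) \<inter> B = Y" using assms(3) by auto
    then show "bernoulli_weight p (A \<union> B) (X \<union> Y) * f ((X \<union> Y) \<inter> A) * g ((X \<union> Y) \<inter> B) =
        bernoulli_weight p A X * f X * (bernoulli_weight p B Y * g Y)"
      using bernoulli_weight_Un[OF assms XY, of p] by simp
  qed
  also have "\<dots> = (\<Sum>X\<in>Pow A. bernoulli_weight p A X * f X) * (\<Sum>Y\<in>Pow B. bernoulli_weight p B Y * g Y)"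
    by (simp add: sum_product sum.cartesian_product split_def)
  finally show ?thesis .
qed

lemma sum_bernoulli_weight_singleton:
  "(\<Sum>X\<in>Pow {x}. bernoulli_weight p {x} X * f X) = (1 - p) * f {} + p * f {x}"
proof -
  have "Pow {x} = {{}, {x}}" by blast
  then show ?thesis by (simp add: bernoulli_weight_def)
qed

lemma sum_bernoulli_weight: "finite A \<Longrightarrow> (\<Sum>E\<in>Pow A. bernoulli_weight p A E) = 1"
proof (induction A rule: finite_induct)
  case empty
  then show ?case by (simp add: bernoulli_weight_def)
next
  case (insert x A)
  then have "(\<Sum>E\<in>Pow ({x} \<union> A). bernoulli_weight p ({x} \<union> A) E * 1 * 1) =
    (\<Sum>X\<in>Pow {x}. bernoulli_weight p {x} X * 1) * (\<Sum>Y\<in>Pow A. bernoulli_weight p A Y * 1)"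
    by (intro sum_bernoulli_weight_Un) auto
  then show ?case using insert sum_bernoulli_weight_singleton[of p x "\<lambda>_. 1"] by simp
qed

lemma sum_bernoulli_weight_restrict:
  assumes "finite A" "B \<subseteq> A"
  shows "(\<Sum>E\<in>Pow A. bernoulli_weight p A E * f (E \<inter> B)) = (\<Sum>X\<in>Pow B. bernoulli_weight p B X * f X)"
proof -
  have "A = B \<union> (A - B)" using assms by auto
  moreover have "(\<Sum>E\<in>Pow (B \<union> (A - B)). bernoulli_weight p (B \<union> (A - B)) E * f (E \<inter> B) * 1) =
    (\<Sum>X\<in>Pow B. bernoulli_weight p B X * f X) * (\<Sum>Y\<in>Pow (A - B). bernoulli_weight p (A - B) Y * 1)"
    using assms by (intro sum_bernoulli_weight_Un) (auto intro: finite_subset)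
  ultimately show ?thesis using sum_bernoulli_weight[of "A - B" p] assms by simp
qed

lemma sum_bernoulli_weight_indep:
  assumes "finite A" "B \<subseteq> A" "C \<subseteq> A" "B \<inter> C = {}"
  shows "(\<Sum>E\<in>Pow A. bernoulli_weight p A E * f (E \<inter> B) * g (E \<inter> C)) =
    (\<Sum>X\<in>Pow B. bernoulli_weight p B X * f X) * (\<Sum>Y\<in>Pow C. bernoulli_weight p C Y * g Y)"
proof -
  have "(\<Sum>E\<in>Pow A. bernoulli_weight p A E * f (E \<inter> B) * g (E \<inter> C)) =
    (\<Sum>E\<in>Pow A. bernoulli_weight p A E * (\<lambda>Z. f (Z \<inter> B) * g (Z \<inter> C)) (E \<inter> (B \<union> C)))"
    by (intro sum.cong refl) (simp add: Int_absorb2 Int_assoc mult.assoc)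
  also have "\<dots> = (\<Sum>Z\<in>Pow (B \<union> C). bernoulli_weight p (B \<union> C) Z * f (Z \<inter> B) * g (Z \<inter> C))"
    using assms by (subst sum_bernoulli_weight_restrict) (auto simp: mult.assoc)
  also have "\<dots> = (\<Sum>X\<in>Pow B. bernoulli_weight p B X * f X) * (\<Sum>Y\<in>Pow C. bernoulli_weight p C Y * g Y)"
    using assms by (intro sum_bernoulli_weight_Un) (auto intro: finite_subset)
  finally show ?thesis .
qed

lemma sum_bernoulli_weight_prod:
  assumes "finite I" "finite A" "\<And>i. i \<in> I \<Longrightarrow> B i \<subseteq> A"
    "\<And>i j. i \<in> I \<Longrightarrow> j \<in> I \<Longrightarrow> i \<noteq> j \<Longrightarrow> B i \<inter> B j = {}"
  shows "(\<Sum>E\<in>Pow A. bernoulli_weight p A E * (\<Prod>i\<in>I. f i (E \<inter> B i))) =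
         (\<Prod>i\<in>I. \<Sum>X\<in>Pow (B i). bernoulli_weight p (B i) X * f i X)"
  using assms
proof (induction I arbitrary: A rule: finite_induct)
  case empty
  then show ?case using sum_bernoulli_weight[of A p] by simp
next
  case (insert i I)
  let ?C = "\<Union>j\<in>I. B j"
  have C: "?C \<subseteq> A" "B i \<inter> ?C = {}"
    using insert.prems(2) insert.prems(3)[of i] insert.hyps(2) by blast+
  have "(\<Sum>E\<in>Pow A. bernoulli_weight p A E * (\<Prod>j\<in>insert i I. f j (E \<inter> B j))) =
    (\<Sum>E\<in>Pow A. bernoulli_weight p A E * f i (E \<inter> B i) * (\<lambda>Y. \<Prod>j\<in>I. f j (Y \<inter> B j)) (E \<inter> ?C))"
  proof (intro sum.cong refl)
    fix E
    have "(\<Prod>j\<in>I. f j (E \<inter> ?C \<inter> B j)) = (\<Prod>j\<in>I. f j (E \<inter> B j))"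
      by (intro prod.cong refl arg_cong[where f = "f _"]) blast
    then show "bernoulli_weight p A E * (\<Prod>j\<in>insert i I. f j (E \<inter> B j)) =
      bernoulli_weight p A E * f i (E \<inter> B i) * (\<lambda>Y. \<Prod>j\<in>I. f j (Y \<inter> B j)) (E \<inter> ?C)"
      using insert.hyps by (simp add: mult.assoc)
  qed
  also have "\<dots> = (\<Sum>X\<in>Pow (B i). bernoulli_weight p (B i) X * f i X) *
      (\<Sum>Y\<in>Pow ?C. bernoulli_weight p ?C Y * (\<Prod>j\<in>I. f j (Y \<inter> B j)))"
    using insert.prems C by (intro sum_bernoulli_weight_indep) auto
  also have "(\<Sum>Y\<in>Pow ?C. bernoulli_weight p ?C Y * (\<Prod>j\<in>I. f j (Y \<inter> B j))) =
      (\<Prod>j\<in>I. \<Sum>X\<in>Pow (B j). bernoulli_weight p (B j) X * f j X)"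
  proof (rule insert.IH)
    show "finite ?C" using C(1) insert.prems(1) by (rule finite_subset)
  qed (use insert.prems(3) in blast)+
  finally show ?case using insert.hyps by simp
qed

lemma sum_bernoulli_weight_none:
  "finite B \<Longrightarrow> (\<Sum>X\<in>Pow B. bernoulli_weight p B X * of_bool (X = {})) = (1 - p) ^ card B"
  by (simp add: of_bool_def bernoulli_weight_def if_distrib[of "\<lambda>x. _ * x"] sum.If_cases)

lemma sum_bernoulli_weight_mem:
  assumes "finite D" "e \<in> D"
  shows "(\<Sum>X\<in>Pow D. bernoulli_weight p D X * of_bool (e \<in> X)) = p"
proof -
  have "(\<Sum>X\<in>Pow D. bernoulli_weight p D X * of_bool (e \<in> X)) =
      (\<Sum>X\<in>Pow D. bernoulli_weight p D X * (\<lambda>Y. of_bool (e \<in> Y)) (X \<inter> {e}))"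
    by (rule sum.cong) auto
  also have "\<dots> = p"
    using assms by (subst sum_bernoulli_weight_restrict) (auto simp: sum_bernoulli_weight_singleton)
  finally show ?thesis .
qed

lemma sum_bernoulli_weight_mem_or_none:
  assumes "finite D" "e \<in> D"
  shows "(\<Sum>X\<in>Pow D. bernoulli_weight p D X * (of_bool (e \<in> X) + of_bool (X = {}))) = p + (1 - p) ^ card D"
  using assms by (simp only: distrib_left sum.distrib sum_bernoulli_weight_mem sum_bernoulli_weight_none)

text \<open>Since \<open>e i \<in> D i\<close>, the two alternatives in each factor are exclusive, so their
  indicators add up to the indicator of the disjunction.\<close>
lemma sum_bernoulli_weight_avoid_prod:
  assumes "finite A" "F \<subseteq> A" "finite I" "\<And>i. i \<in> I \<Longrightarrow> D i \<subseteq> A - F"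
    "\<And>i j. i \<in> I \<Longrightarrow> j \<in> I \<Longrightarrow> i \<noteq> j \<Longrightarrow> D i \<inter> D j = {}"
    "\<And>i. i \<in> I \<Longrightarrow> e i \<in> D i"
  shows "(\<Sum>E\<in>Pow A. bernoulli_weight p A E *
      (of_bool (E \<inter> F = {}) * (\<Prod>i\<in>I. of_bool (e i \<in> E) + of_bool (E \<inter> D i = {})))) =
    (1 - p) ^ card F * (\<Prod>i\<in>I. p + (1 - p) ^ card (D i))"
proof -
  let ?h = "\<lambda>i X. of_bool (e i \<in> X) + of_bool (X = {}) :: real"
  have fin: "finite F" "\<And>i. i \<in> I \<Longrightarrow> finite (D i)"
    using finite_subset[OF assms(2,1)] finite_subset[OF assms(4) finite_Diff[OF assms(1)]] by auto
  have "(\<Sum>E\<in>Pow A. bernoulli_weight p A E *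
      (of_bool (E \<inter> F = {}) * (\<Prod>i\<in>I. of_bool (e i \<in> E) + of_bool (E \<inter> D i = {})))) =
    (\<Sum>E\<in>Pow A. bernoulli_weight p A E * (\<lambda>X. of_bool (X = {})) (E \<inter> F) *
      (\<lambda>Y. \<Prod>i\<in>I. ?h i (Y \<inter> D i)) (E \<inter> (A - F)))"
  proof (intro sum.cong refl)
    fix E
    have "(\<Prod>i\<in>I. ?h i (E \<inter> (A - F) \<inter> D i)) = (\<Prod>i\<in>I. of_bool (e i \<in> E) + of_bool (E \<inter> D i = {}))"
    proof (intro prod.cong refl)
      fix i assume "i \<in> I"
      then have "E \<inter> (A - F) \<inter> D i = E \<inter> D i" "e i \<in> D i" using assms(4,6) by blast+
      then show "?h i (E \<inter> (A - F) \<inter> D i) = of_bool (e i \<in> E) + of_bool (E \<inter> D i = {})" by simp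
    qed
    then show "bernoulli_weight p A E * (of_bool (E \<inter> F = {}) * (\<Prod>i\<in>I. of_bool (e i \<in> E) + of_bool (E \<inter> D i = {}))) =
        bernoulli_weight p A E * (\<lambda>X. of_bool (X = {})) (E \<inter> F) * (\<lambda>Y. \<Prod>i\<in>I. ?h i (Y \<inter> D i)) (E \<inter> (A - F))"
      by (simp only: mult.assoc)
  qed
  also have "\<dots> = (\<Sum>X\<in>Pow F. bernoulli_weight p F X * of_bool (X = {})) *
      (\<Sum>Y\<in>Pow (A - F). bernoulli_weight p (A - F) Y * (\<Prod>i\<in>I. ?h i (Y \<inter> D i)))"
    using assms(1,2) by (intro sum_bernoulli_weight_indep) auto
  also have "\<dots> = (1 - p) ^ card F * (\<Prod>i\<in>I. \<Sum>X\<in>Pow (D i). bernoulli_weight p (D i) X * ?h i X)"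
  proof -
    have "(\<Sum>Y\<in>Pow (A - F). bernoulli_weight p (A - F) Y * (\<Prod>i\<in>I. ?h i (Y \<inter> D i))) =
        (\<Prod>i\<in>I. \<Sum>X\<in>Pow (D i). bernoulli_weight p (D i) X * ?h i X)"
      using assms by (intro sum_bernoulli_weight_prod) auto
    then show ?thesis using fin(1) by (simp only: sum_bernoulli_weight_none)
  qed
  also have "\<dots> = (1 - p) ^ card F * (\<Prod>i\<in>I. p + (1 - p) ^ card (D i))"
    using assms(6) fin(2) by (simp add: sum_bernoulli_weight_mem_or_none)
  finally show ?thesis .
qed

lemma finite_all_edges: "finite (all_edges n)"
  by (rule finite_subset[of _ "Pow {..<n}"]) (auto simp: all_edges_def)

lemma gnp_expectation_eq_sum_bernoulli_weight:
  "gnp_expectation n p X = (\<Sum>E\<in>Pow (all_edges n). bernoulli_weight p (all_edges n) E * X E)"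
  unfolding gnp_expectation_def bernoulli_weight_def
proof (rule sum.cong[OF refl])
  fix E assume "E \<in> Pow (all_edges n)"
  then have "card (all_edges n) - card E = card (all_edges n - E)"
    using finite_all_edges by (metis PowD card_Diff_subset finite_subset)
  then show "p ^ card E * (1 - p) ^ (card (all_edges n) - card E) * X E =
      p ^ card E * (1 - p) ^ card (all_edges n - E) * X E" by simp
qed

definition edges_from :: "'a \<Rightarrow> 'a set \<Rightarrow> 'a set set" where
  "edges_from v X = (\<lambda>u. {v, u}) ` X"

lemma inj_doubleton: "inj (\<lambda>u. {v, u})"
  by (rule injI) (metis doubleton_eq_iff)

lemma card_edges_from [simp]: "card (edges_from v X) = card X"
  unfolding edges_from_def by (rule card_image[OF inj_on_subset[OF inj_doubleton subset_UNIV]])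

lemma finite_edges_from [simp]: "finite (edges_from v X) \<longleftrightarrow> finite X"
  unfolding edges_from_def by (rule finite_image_iff[OF inj_on_subset[OF inj_doubleton subset_UNIV]])

lemma edges_from_disjoint: "u \<noteq> v \<Longrightarrow> v \<notin> X \<Longrightarrow> edges_from u X \<inter> edges_from v Y = {}"
  unfolding edges_from_def by (auto simp: doubleton_eq_iff)

lemma edges_from_subset_all_edges:
  "v < n \<Longrightarrow> X \<subseteq> {..<n} \<Longrightarrow> v \<notin> X \<Longrightarrow> edges_from v X \<subseteq> all_edges n"
  unfolding edges_from_def all_edges_def by auto

definition witness_indicator :: "nat \<Rightarrow> nat \<Rightarrow> nat set \<Rightarrow> nat \<Rightarrow> nat set set \<Rightarrow> real" where
  "witness_indicator n a S w E =
     of_bool (E \<inter> (edges_from a S \<union> edges_from w (insert a S)) = {}) *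
     (\<Prod>v\<in>{..<n} - insert w (insert a S).
        of_bool ({v, a} \<in> E) + of_bool (E \<inter> edges_from v (insert a S) = {}))"

lemma witness_indicator_nonneg: "witness_indicator n a S w E \<ge> 0"
  unfolding witness_indicator_def by (intro mult_nonneg_nonneg prod_nonneg) auto

lemma sum_bernoulli_weight_witness_indicator:
  assumes a: "a < n" and S: "S \<subseteq> {..<n} - {a}" and w: "w \<in> {..<n} - insert a S"
  shows "(\<Sum>E\<in>Pow (all_edges n). bernoulli_weight p (all_edges n) E * witness_indicator n a S w E) =
    (1 - p) ^ (2 * card S + 1) * (p + (1 - p) ^ (card S + 1)) ^ card ({..<n} - insert w (insert a S))"
proof -
  let ?F = "edges_from a S \<union> edges_from w (insert a S)"
  let ?R = "{..<n} - insert w (insert a S)"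
  let ?D = "\<lambda>v. edges_from v (insert a S)"
  have fS: "finite S" and aS: "a \<notin> S" and wS: "w \<notin> insert a S" using S w finite_subset by auto
  have "card ?F = 2 * card S + 1"
    using fS aS wS card_Un_disjoint[of "edges_from a S" "edges_from w (insert a S)"]
      edges_from_disjoint[of a w S "insert a S"] by (simp add: card_insert_if)
  moreover have "card (?D v) = card S + 1" for v using fS aS by simp
  moreover have "?F \<subseteq> all_edges n"
    using a S w by (intro Un_least edges_from_subset_all_edges) auto
  moreover have "?D v \<subseteq> all_edges n - ?F" if "v \<in> ?R" for v
    using that a S w edges_from_subset_all_edges[of v n "insert a S"]
      edges_from_disjoint[of a v S "insert a S"] edges_from_disjoint[of v w "insert a S" "insert a S"]
    by auto
  moreover have "?D u \<inter> ?D v = {}" if "u \<in> ?R" "v \<in> ?R" "u \<noteq> v" for u v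
    using that by (intro edges_from_disjoint) auto
  moreover have "{v, a} \<in> ?D v" for v unfolding edges_from_def by simp
  ultimately show ?thesis
    unfolding witness_indicator_def using finite_all_edges fS
    by (subst sum_bernoulli_weight_avoid_prod) auto
qed

lemma star_separation_witness_indicator:
  assumes "star_separation n E a S"
  shows "\<exists>w\<in>{..<n} - insert a S. witness_indicator n a S w E = 1"
proof -
  let ?W = "{..<n} - st E a"
  have not_st: "v \<notin> st E a \<longleftrightarrow> v \<noteq> a \<and> {a, v} \<notin> E" for v
    unfolding st_def by auto
  have SW: "S \<subseteq> ?W" and "S \<noteq> ?W" and no_edge: "\<And>u v. u \<in> S \<Longrightarrow> v \<in> ?W - S \<Longrightarrow> {u, v} \<notin> E"
    using assms unfolding star_separation_def is_separation_def by auto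
  then obtain w where w: "w \<in> ?W - S" by blast
  have "E \<inter> (edges_from a S \<union> edges_from w (insert a S)) = {}"
    using SW w no_edge[OF _ w] not_st unfolding edges_from_def by (auto simp: insert_commute)
  moreover have "of_bool ({v, a} \<in> E) + of_bool (E \<inter> edges_from v (insert a S) = {}) = (1::real)"
    if v: "v \<in> {..<n} - insert w (insert a S)" for v
  proof (cases "{a, v} \<in> E")
    case True
    then show ?thesis unfolding edges_from_def by (auto simp: insert_commute)
  next
    case False
    then have "v \<in> ?W - S" using v not_st by auto
    then have "E \<inter> edges_from v (insert a S) = {}"
      using False no_edge unfolding edges_from_def by (auto simp: insert_commute)
    then show ?thesis using False by (simp add: insert_commute)
  qed
  ultimately have "witness_indicator n a S w E = 1"
    unfolding witness_indicator_def by simp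
  moreover have "w \<in> {..<n} - insert a S" using w not_st by auto
  ultimately show ?thesis by blast
qed

lemma U_le_sum_witness_indicator:
  "real (U n k E) \<le> (\<Sum>a<n. \<Sum>S | S \<subseteq> {..<n} - {a} \<and> card S = k.
      \<Sum>w\<in>{..<n} - insert a S. witness_indicator n a S w E)"
proof -
  let ?K = "\<lambda>a. {S. S \<subseteq> {..<n} - {a} \<and> card S = k}"
  let ?T = "{(a, S). proper_star_k_separation n E k a S}"
  let ?f = "\<lambda>(a, S). \<Sum>w\<in>{..<n} - insert a S. witness_indicator n a S w E"
  have T_sub: "?T \<subseteq> Sigma {..<n} ?K"
    unfolding proper_star_k_separation_def star_separation_def st_def by auto
  have "real (U n k E) = (\<Sum>x\<in>?T. 1)" unfolding U_def by simp
  also have "\<dots> \<le> (\<Sum>x\<in>?T. ?f x)"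
  proof (rule sum_mono)
    fix x assume "x \<in> ?T"
    then obtain a S where x: "x = (a, S)" and "proper_star_k_separation n E k a S" by blast
    then obtain w where w: "w \<in> {..<n} - insert a S" "witness_indicator n a S w E = 1"
      using star_separation_witness_indicator unfolding proper_star_k_separation_def by blast
    then show "1 \<le> ?f x"
      unfolding x using member_le_sum[OF w(1), of "\<lambda>w. witness_indicator n a S w E"] witness_indicator_nonneg
      by simp
  qed
  also have "\<dots> \<le> (\<Sum>x\<in>Sigma {..<n} ?K. ?f x)"
    using T_sub by (intro sum_mono2) (auto intro: sum_nonneg witness_indicator_nonneg)
  also have "\<dots> = (\<Sum>a<n. \<Sum>S\<in>?K a. ?f (a, S))"
    by (subst sum.Sigma) (auto simp: split_def)
  finally show ?thesis by simp
qed

lemma gnp_expectation_U_le: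
  assumes "0 \<le> p" "p \<le> 1"
  shows "gnp_expectation n p (\<lambda>E. real (U n k E)) \<le>
    real n * real ((n - 1) choose k) * real (n - 1 - k) *
    ((1 - p) ^ (2 * k + 1) * (p + (1 - p) ^ (k + 1)) ^ (n - k - 2))"
proof -
  let ?A = "all_edges n"
  let ?K = "\<lambda>a. {S. S \<subseteq> {..<n} - {a} \<and> card S = k}"
  let ?c = "(1 - p) ^ (2 * k + 1) * (p + (1 - p) ^ (k + 1)) ^ (n - k - 2)"
  have card_rest: "card ({..<n} - insert a S) = n - 1 - k" if "a < n" "S \<in> ?K a" for a S
  proof -
    have "finite S" "a \<notin> S" "insert a S \<subseteq> {..<n}" using that finite_subset by auto
    then show ?thesis using that by (simp only: card_Diff_subset finite_insert card_insert_disjoint card_lessThan) simp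
  qed
  have "gnp_expectation n p (\<lambda>E. real (U n k E)) = (\<Sum>E\<in>Pow ?A. bernoulli_weight p ?A E * real (U n k E))"
    by (rule gnp_expectation_eq_sum_bernoulli_weight)
  also have "\<dots> \<le> (\<Sum>E\<in>Pow ?A. bernoulli_weight p ?A E *
      (\<Sum>a<n. \<Sum>S\<in>?K a. \<Sum>w\<in>{..<n} - insert a S. witness_indicator n a S w E))"
    using assms by (intro sum_mono mult_left_mono U_le_sum_witness_indicator) (simp add: bernoulli_weight_def)
  also have "\<dots> = (\<Sum>a<n. \<Sum>S\<in>?K a. \<Sum>w\<in>{..<n} - insert a S.
       \<Sum>E\<in>Pow ?A. bernoulli_weight p ?A E * witness_indicator n a S w E)"
    by (simp add: sum_distrib_left sum.swap[of _ "Pow ?A"])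
  also have "\<dots> = (\<Sum>a<n. \<Sum>S\<in>?K a. \<Sum>w\<in>{..<n} - insert a S. ?c)"
  proof (intro sum.cong refl)
    fix a S w assume a: "a \<in> {..<n}" and S: "S \<in> ?K a" and w: "w \<in> {..<n} - insert a S"
    have "{..<n} - insert w (insert a S) = {..<n} - insert a S - {w}" by auto
    then have "card ({..<n} - insert w (insert a S)) = n - k - 2"
      using w card_rest[of a S] a S by simp
    then show "(\<Sum>E\<in>Pow ?A. bernoulli_weight p ?A E * witness_indicator n a S w E) = ?c"
      using sum_bernoulli_weight_witness_indicator[of a n S w p] a S w by simp
  qed
  also have "\<dots> = real n * real ((n - 1) choose k) * real (n - 1 - k) * ?c"
  proof -
    have "card (?K a) = (n - 1) choose k" if "a < n" for a
      using that n_subsets[of "{..<n} - {a}" k] by simp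
    then show ?thesis using card_rest by simp
  qed
  finally show ?thesis .
qed

lemma binomial_growth:
  "(m + k + 1) * ((m + k) choose k) * m \<le> (k + 1) * (k + 2) * ((m + k + 2) choose (k + 2))"
proof -
  have "(k + 1) * (k + 2) * ((m + k + 2) choose (k + 2)) =
      Suc k * (Suc (Suc k) * (Suc (Suc (m + k)) choose Suc (Suc k)))"
    by (simp del: binomial_Suc_Suc add: numeral_2_eq_2 algebra_simps)
  also have "\<dots> = Suc (Suc (m + k)) * (Suc k * (Suc (m + k) choose Suc k))"
    by (metis Suc_times_binomial mult.left_commute)
  also have "\<dots> = (m + k + 1) * ((m + k) choose k) * (m + k + 2)"
    by (simp only: Suc_times_binomial) (simp del: binomial_Suc_Suc)
  finally have eq: "(k + 1) * (k + 2) * ((m + k + 2) choose (k + 2)) =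
      (m + k + 1) * ((m + k) choose k) * (m + k + 2)" .
  have "(m + k + 1) * ((m + k) choose k) * m \<le> (m + k + 1) * ((m + k) choose k) * (m + k + 2)"
    by (intro mult_le_mono2) simp
  then show ?thesis by (simp only: eq)
qed

lemma binomial_term_le_one:
  fixes y r :: real
  assumes "0 \<le> y" "0 \<le> r" "y + r = 1" "j \<le> M"
  shows "real (M choose j) * y ^ j * r ^ (M - j) \<le> 1"
proof -
  have "real (M choose j) * y ^ j * r ^ (M - j) \<le> (\<Sum>i\<le>M. real (M choose i) * y ^ i * r ^ (M - i))"
    using assms by (intro member_le_sum) auto
  also have "\<dots> = (y + r) ^ M" by (simp add: binomial_ring)
  finally show ?thesis using assms by simp
qed

definition separation_count_bound :: "nat \<Rightarrow> real" where
  "separation_count_bound k =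
     5/2 * (real k + 1) * (real k + 2) * (3/5) ^ (k - 1) / (1 - (3/5) ^ k) ^ (k + 2)"

lemma three_fifths_power_le: "k \<ge> 1 \<Longrightarrow> (3/5::real) ^ k \<le> 3/5"
  using power_decreasing[of 1 k "3/5::real"] by simp

lemma separation_count_bound_pos: "k \<ge> 1 \<Longrightarrow> separation_count_bound k > 0"
  using three_fifths_power_le[of k] unfolding separation_count_bound_def by simp

text \<open>One term of the binomial expansion of \<open>1 = (x (1 - x^k) + r)^(m+k+2)\<close>,
  where \<open>r = 1 - x + x^(k+1)\<close>.\<close>
lemma binomial_term_three_fifths_le:
  fixes x :: real
  assumes k: "k \<ge> 1" and x: "0 \<le> x" "x \<le> 3/5"
  shows "real ((m + k + 2) choose (k + 2)) * x ^ (k + 2) * (1 - x + x ^ (k + 1)) ^ m \<le>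
    1 / (1 - (3/5) ^ k) ^ (k + 2)"
proof -
  let ?r = "1 - x + x ^ (k + 1)"
  let ?q = "1 - (3/5::real) ^ k"
  let ?C = "real ((m + k + 2) choose (k + 2))"
  have q: "0 < ?q" "?q \<le> 1 - x ^ k"
    using three_fifths_power_le[OF k] power_mono[OF x(2) x(1), of k] by auto
  have r: "0 \<le> ?r" using x zero_le_power[OF x(1), of "k + 1"] by linarith
  have "x * ?q \<le> x * (1 - x ^ k)" using q x by (intro mult_left_mono) auto
  then have xq: "x * ?q \<le> x - x ^ (k + 1)" by (simp add: algebra_simps)
  have y: "0 \<le> x - x ^ (k + 1)" using xq q x by (meson less_imp_le mult_nonneg_nonneg order_trans)
  have "?C * (x * ?q) ^ (k + 2) * ?r ^ m \<le> ?C * (x - x ^ (k + 1)) ^ (k + 2) * ?r ^ m"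
    using xq q x r by (intro mult_right_mono mult_left_mono power_mono) auto
  also have "\<dots> \<le> 1"
  proof -
    have "?C * (x - x ^ (k + 1)) ^ (k + 2) * ?r ^ (m + k + 2 - (k + 2)) \<le> 1"
      using y r by (intro binomial_term_le_one) auto
    moreover have "m + k + 2 - (k + 2) = m" by simp
    ultimately show ?thesis by (simp only:)
  qed
  finally have "?q ^ (k + 2) * (?C * x ^ (k + 2) * ?r ^ m) \<le> 1"
    by (simp add: power_mult_distrib mult_ac del: binomial_Suc_Suc)
  then show ?thesis using q by (simp add: pos_le_divide_eq mult.commute del: binomial_Suc_Suc)
qed

lemma expectation_bound_le_separation_count_bound:
  fixes x :: real
  assumes k: "k \<ge> 1" and n: "k < n" and x: "0 \<le> x" "x \<le> 3/5"
  shows "real n * real ((n - 1) choose k) * real (n - 1 - k) *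
      (x ^ (2 * k + 1) * (1 - x + x ^ (k + 1)) ^ (n - k - 2)) \<le> separation_count_bound k"
proof -
  obtain m where n_eq: "n = m + k + 1"
    using n by (metis Suc_eq_plus1 add.commute less_imp_Suc_add)
  let ?r = "1 - x + x ^ (k + 1)"
  let ?q = "1 - (3/5::real) ^ k"
  let ?C = "real ((m + k + 2) choose (k + 2))"
  have r: "2/5 \<le> ?r" using x zero_le_power[OF x(1), of "k + 1"] by linarith
  show ?thesis
  proof (cases "m = 0")
    case True
    then show ?thesis using separation_count_bound_pos[OF k] unfolding n_eq by simp
  next
    case False
    have binomial: "?C * x ^ (k + 2) * ?r ^ m \<le> 1 / ?q ^ (k + 2)"
      using k x by (rule binomial_term_three_fifths_le)
    have r_pred: "?r ^ (m - 1) \<le> 5/2 * ?r ^ m"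
      using r False by (cases m) auto
    have count: "real (m + k + 1) * real ((m + k) choose k) * real m \<le> (real k + 1) * (real k + 2) * ?C"
    proof -
      have "real ((m + k + 1) * ((m + k) choose k) * m) \<le> real ((k + 1) * (k + 2) * ((m + k + 2) choose (k + 2)))"
        using binomial_growth[of m k] by (simp only: of_nat_le_iff)
      then show ?thesis by (simp only: of_nat_mult of_nat_add of_nat_1 of_nat_numeral)
    qed
    have x_split: "x ^ (2 * k + 1) = x ^ (k - 1) * x ^ (k + 2)"
    proof -
      have "2 * k + 1 = (k - 1) + (k + 2)" using k by simp
      then show ?thesis by (simp only: power_add)
    qed
    have "real n * real ((n - 1) choose k) * real (n - 1 - k) *
        (x ^ (2 * k + 1) * ?r ^ (n - k - 2)) =
        (real (m + k + 1) * real ((m + k) choose k) * real m) * (x ^ (k - 1) * (x ^ (k + 2) * ?r ^ (m - 1)))"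
      unfolding n_eq x_split by (simp add: mult_ac del: binomial_Suc_Suc)
    also have "\<dots> \<le> ((real k + 1) * (real k + 2) * ?C) * ((3/5) ^ (k - 1) * (x ^ (k + 2) * (5/2 * ?r ^ m)))"
    proof (rule mult_mono[OF count])
      show "x ^ (k - 1) * (x ^ (k + 2) * ?r ^ (m - 1)) \<le> (3/5) ^ (k - 1) * (x ^ (k + 2) * (5/2 * ?r ^ m))"
        using r_pred x r by (intro mult_mono power_mono mult_left_mono) auto
      show "0 \<le> x ^ (k - 1) * (x ^ (k + 2) * ?r ^ (m - 1))" using x r by simp
    qed simp
    also have "\<dots> = 5/2 * (real k + 1) * (real k + 2) * (3/5) ^ (k - 1) * (?C * x ^ (k + 2) * ?r ^ m)"
      by (simp only: mult_ac)
    also have "\<dots> \<le> 5/2 * (real k + 1) * (real k + 2) * (3/5) ^ (k - 1) * (1 / ?q ^ (k + 2))"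
      using binomial by (intro mult_left_mono) auto
    finally show ?thesis unfolding separation_count_bound_def by simp
  qed
qed

lemma three_fifths_power_tail: "k \<ge> 6 \<Longrightarrow> (real k + 2) * (3/5) ^ k \<le> 1/2"
proof (induction k rule: dec_induct)
  case base
  then show ?case by (simp add: power_divide)
next
  case (step k)
  have "(real (Suc k) + 2) * (3/5) ^ Suc k = (3/5 * (real k + 3)) * (3/5::real) ^ k"
    by simp
  also have "\<dots> \<le> (real k + 2) * (3/5) ^ k"
    by (intro mult_right_mono) auto
  finally show ?case using step.IH by linarith
qed

lemma separation_count_bound_denominator: "k \<ge> 6 \<Longrightarrow> 1/2 \<le> (1 - (3/5::real) ^ k) ^ (k + 2)"
  using Bernoulli_inequality[of "-((3/5::real) ^ k)" "k + 2"] three_fifths_power_tail[of k]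
  by (simp add: power_le_one algebra_simps)

lemma separation_count_bound_le:
  assumes "k \<ge> 6"
  shows "separation_count_bound k \<le> 25/3 * ((real k + 1) * (real k + 2) * (3/5) ^ k)"
proof -
  let ?P = "(real k + 1) * (real k + 2) * (3/5::real) ^ k"
  have power_pred: "(3/5::real) ^ (k - 1) = 5/3 * (3/5) ^ k"
    using assms by (cases k) simp_all
  have "separation_count_bound k = 25/6 * ?P * (1 / (1 - (3/5::real) ^ k) ^ (k + 2))"
    unfolding separation_count_bound_def power_pred by (simp add: mult_ac)
  also have "\<dots> \<le> 25/6 * ?P * 2"
    using separation_count_bound_denominator[OF assms] by (intro mult_left_mono) (auto simp: divide_le_eq)
  finally show ?thesis by simp
qed

lemma summable_polynomial_times_three_fifths_power:
  "summable (\<lambda>k. (real k + 1) * (real k + 2) * (3/5::real) ^ k)"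
proof (rule summable_ratio_test[of "9/10" 3])
  fix k :: nat assume "3 \<le> k"
  then have "3/5 * (real k + 3) \<le> 9/10 * (real k + 1)" by simp
  then have "(real k + 2) * (3/5 * (real k + 3)) * (3/5::real) ^ k \<le> (real k + 2) * (9/10 * (real k + 1)) * (3/5) ^ k"
    by (intro mult_right_mono mult_left_mono) auto
  then show "norm ((real (Suc k) + 1) * (real (Suc k) + 2) * (3/5::real) ^ Suc k) \<le>
      9/10 * norm ((real k + 1) * (real k + 2) * (3/5::real) ^ k)"
    by (simp add: abs_mult mult_ac add_ac)
qed simp

lemma summable_separation_count_bound: "summable (\<lambda>k. separation_count_bound (Suc k))"
  unfolding summable_Suc_iff
proof (rule summable_comparison_test')
  show "summable (\<lambda>k. 25/3 * ((real k + 1) * (real k + 2) * (3/5::real) ^ k))"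
    by (intro summable_mult summable_polynomial_times_three_fifths_power)
  show "norm (separation_count_bound k) \<le> 25/3 * ((real k + 1) * (real k + 2) * (3/5) ^ k)" if "6 \<le> k" for k
    using separation_count_bound_le[OF that] separation_count_bound_pos[of k] that by simp
qed

theorem proposition3p4:
  shows "\<exists>a :: nat \<Rightarrow> real. (\<forall>k\<ge>1. a k > 0) \<and> summable (\<lambda>k. a (Suc k)) \<and>
    (\<forall>k n p. k \<ge> 1 \<longrightarrow> n \<ge> 2 * k \<longrightarrow> 2/5 \<le> p \<longrightarrow> p \<le> 1 \<longrightarrow>
       gnp_expectation n p (\<lambda>E. real (U n k E)) \<le> a k)"
proof (intro exI[of _ separation_count_bound] conjI allI impI)
  show "\<And>k. 1 \<le> k \<Longrightarrow> 0 < separation_count_bound k" by (rule separation_count_bound_pos)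
  show "summable (\<lambda>k. separation_count_bound (Suc k))" by (rule summable_separation_count_bound)
  fix k n :: nat and p :: real
  assume k: "1 \<le> k" and n: "2 * k \<le> n" and p: "2/5 \<le> p" "p \<le> 1"
  have "gnp_expectation n p (\<lambda>E. real (U n k E)) \<le>
      real n * real ((n - 1) choose k) * real (n - 1 - k) *
      ((1 - p) ^ (2 * k + 1) * (p + (1 - p) ^ (k + 1)) ^ (n - k - 2))"
    using p by (intro gnp_expectation_U_le) auto
  also have "\<dots> \<le> separation_count_bound k"
    using expectation_bound_le_separation_count_bound[of k n "1 - p"] k n p by simp
  finally show "gnp_expectation n p (\<lambda>E. real (U n k E)) \<le> separation_count_bound k" .
qed

end
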